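(* Let $n\ge1$, $k>0$, let $F$ be a complex polynomial of degree exactly $n$ having all its zeros in $|z|\le k$, and let $P\in\mathscr P_n$ satisfy $|P(z)|\le|F(z)|$ for $|z|=k$. Then for all $\beta\in\mathbb C$ with $|\beta|\le1$, all $R>r\ge k$ and all $|z|\ge1$, $$\Big|B[P\circ\sigma](z)+\beta\Big(\tfrac{R+k}{k+r}\Big)^nB[P\circ\rho](z)\Big|\le\Big|B[F\circ\sigma](z)+\beta\Big(\tfrac{R+k}{k+r}\Big)^nB[F\circ\rho](z)\Big|.$$ Equality holds for $P=e^{i\gamma}F$, $\gamma\in\mathbb R$.
   Context: For an integer $n\ge1$, $\mathscr P_n$ denotes the set of complex polynomials of degree at most $n$. Fix complex numbers $\lambda_0,\lambda_1,\lambda_2$ such that all zeros of $U(z)=\lambda_0+n\lambda_1 z+\frac{n(n-1)}{2}\lambda_2 z^2$ lie in the half-plane $\{z\in\mathbb C:|z|\le|z-n/2|\}$. The operator $B$ (of the class $\mathcal B_n$) sends $P\in\mathscr P_n$ to $B[P](z)=\lambda_0P(z)+\lambda_1\frac{nz}{2}P'(z)+\lambda_2\left(\frac{nz}{2}\right)^2\frac{P''(z)}{2!}$. For a polynomial $P$ and a map $\rho$, $P\circ\rho$ denotes $z\mapsto P(\rho(z))$, and $B[P\circ\rho](z)$ is $B$ applied to the polynomial $P\circ\rho$, evaluated at $z$. $\sigma(z)=Rz$, $\rho(z)=rz$. *)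

theory Defs
  imports "HOL-Analysis.Analysis" "HOL-Computational_Algebra.Polynomial"
begin

definition B_op :: "nat \<Rightarrow> complex \<Rightarrow> complex \<Rightarrow> complex \<Rightarrow> complex poly \<Rightarrow> complex \<Rightarrow> complex" where
  "B_op n l0 l1 l2 P z =
     l0 * poly P z + l1 * (of_nat n * z / 2) * poly (pderiv P) z
     + l2 * (of_nat n * z / 2)^2 * poly (pderiv (pderiv P)) z / 2"

definition U_poly :: "nat \<Rightarrow> complex \<Rightarrow> complex \<Rightarrow> complex \<Rightarrow> complex \<Rightarrow> complex" where
  "U_poly n l0 l1 l2 z = l0 + of_nat n * l1 * z + of_nat (n * (n - 1)) / 2 * l2 * z^2"

end

theory Submission
  imports Defs "HOL-Computational_Algebra.Fundamental_Theorem_Algebra"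
    "HOL-Complex_Analysis.Conformal_Mappings"
begin

text \<open>Write \<open>G[H](z) = H(Rz) + \<beta> ((R+k)/(k+r))^n H(rz)\<close>. If \<open>H\<close> has degree \<open>n\<close> and all
  zeros in \<open>|w| \<le> k\<close>, comparing \<open>|Rz - w|\<close> with \<open>|rz - w|\<close> factor by factor shows that
  \<open>G[H]\<close> again has degree \<open>n\<close> and all its zeros in the closed unit disk. Factoring \<open>U\<close> into
  linear factors whose zeros lie in \<open>|y| \<le> |y - n/2|\<close> writes \<open>B\<close> as a composite of at most
  two operators \<open>\<mu> n f + (t - \<mu> z) f'\<close> with \<open>|t| > |\<mu>|\<close>, each of which keeps all zeros in the
  closed unit disk (a Laguerre-type argument); hence \<open>B[G[H]]\<close> does not vanish for \<open>|z| > 1\<close>.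
  If \<open>|B[G[P]](z)| > |B[G[F]](z)|\<close> for some \<open>|z| > 1\<close>, put \<open>a = B[G[P]](z) / B[G[F]](z)\<close>.
  The maximum modulus principle gives \<open>|P| \<le> |F|\<close> for \<open>|z| \<ge> k\<close> and
  \<open>|lead P| \<le> |lead F|\<close>, so \<open>P - aF\<close> has degree \<open>n\<close> and all zeros in \<open>|w| \<le> k\<close>, while
  \<open>B[G[P - aF]](z) = 0\<close>: a contradiction. The circle \<open>|z| = 1\<close> follows by continuity,
  and the equality case follows from linearity.\<close>

lemma Re_laguerre_term_pos:
  fixes t mu z w :: complex
  assumes z: "cmod z > 1" and w: "cmod w \<le> 1" and t: "cmod t > cmod mu"
  shows "Re ((z * cnj t - cnj mu) * ((t - mu * w) / (z - w))) > 0"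
proof -
  have pos: "(cmod (z - w))\<^sup>2 > 0" using z w by auto
  \<comment> \<open>a Lagrange-type identity splitting the numerator into three terms of known sign\<close>
  have ident: "2 * Re ((t - mu * w) * cnj (z - w) * (z * cnj t - cnj mu)) =
      (cmod (t - mu * w))\<^sup>2 * ((cmod z)\<^sup>2 - 1) + ((cmod t)\<^sup>2 - (cmod mu)\<^sup>2) * (cmod (z - w))\<^sup>2
      + (cmod (t - mu * z))\<^sup>2 * (1 - (cmod w)\<^sup>2)"
    unfolding cmod_power2 by (simp add: power2_eq_square algebra_simps)
  have "(cmod (t - mu * w))\<^sup>2 * ((cmod z)\<^sup>2 - 1) \<ge> 0"
    using z by (simp add: abs_square_le_1 one_less_power)
  moreover have "((cmod t)\<^sup>2 - (cmod mu)\<^sup>2) * (cmod (z - w))\<^sup>2 > 0"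
    using t pos by (simp add: power_strict_mono)
  moreover have "(cmod (t - mu * z))\<^sup>2 * (1 - (cmod w)\<^sup>2) \<ge> 0"
    using w by (simp add: power_le_one)
  ultimately have "Re ((t - mu * w) * cnj (z - w) * (z * cnj t - cnj mu)) > 0"
    using ident by linarith
  moreover have "(z * cnj t - cnj mu) * ((t - mu * w) / (z - w)) =
      ((t - mu * w) * cnj (z - w) * (z * cnj t - cnj mu)) / complex_of_real ((cmod (z - w))\<^sup>2)"
    by (subst complex_div_cnj) (simp add: mult_ac)
  ultimately show ?thesis using pos by (simp add: Re_divide_of_real)
qed

lemma Re_cnj_mult_diff_pos:
  fixes t mu w :: complex
  assumes w: "cmod w \<le> 1" and t: "cmod t > cmod mu"
  shows "Re (cnj t * (t - mu * w)) > 0"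
proof -
  have tpos: "cmod t > 0" using t norm_ge_zero[of mu] by linarith
  have "Re (cnj t * (mu * w)) \<le> cmod (cnj t * (mu * w))" by (rule complex_Re_le_cmod)
  also have "\<dots> = cmod t * cmod mu * cmod w" by (simp add: norm_mult)
  also have "\<dots> \<le> cmod t * cmod mu" using w by (simp add: mult_left_le)
  also have "\<dots> < cmod t * cmod t" by (rule mult_strict_left_mono[OF t tpos])
  also have "\<dots> = Re (cnj t * t)" using cmod_power2[of t] by (simp add: power2_eq_square)
  finally show ?thesis unfolding right_diff_distrib by simp
qed

text \<open>For \<open>mu = 1\<close> this is the polar derivative of \<open>f\<close> with respect to \<open>t\<close>.\<close>
definition laguerre_op :: "complex \<Rightarrow> complex \<Rightarrow> complex poly \<Rightarrow> complex poly" where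
  "laguerre_op mu t f = smult (mu * of_nat (degree f)) f + [:t, -mu:] * pderiv f"

lemma laguerre_op_degree_0:
  fixes f :: "complex poly"
  assumes "degree f = 0"
  shows "laguerre_op mu t f = 0"
proof -
  have "pderiv f = 0" using assms pderiv_eq_0_iff by blast
  then show ?thesis unfolding laguerre_op_def assms by simp
qed

lemma degree_linear_factor:
  fixes h :: "'a::idom poly"
  assumes "h \<noteq> 0"
  shows "degree ([:-w, 1:] * h) = Suc (degree h)"
proof -
  have "degree ([:-w, 1:] * h) = degree [:-w, 1:] + degree h"
    by (rule degree_mult_eq) (use assms in auto)
  then show ?thesis by simp
qed

lemma poly_linear_factor:
  fixes p :: "'a::comm_ring_1 poly"
  shows "poly ([:-w, 1:] * p) z = (z - w) * poly p z"
  by (simp add: algebra_simps)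

lemma laguerre_op_linear_factor:
  assumes "h \<noteq> 0"
  shows "laguerre_op mu t ([:-w, 1:] * h) = [:-w, 1:] * laguerre_op mu t h + smult (t - mu * w) h"
  unfolding laguerre_op_def degree_linear_factor[OF assms]
  by (intro poly_eq_poly_eq_iff[THEN iffD1] ext)
    (simp add: pderiv_diff pderiv_smult pderiv_add pderiv_pCons algebra_simps)

lemma root_linear_factorE:
  fixes f :: "complex poly"
  assumes "degree f = Suc m"
  obtains w h where "poly f w = 0" "f = [:-w, 1:] * h" "h \<noteq> 0" "degree h = m"
proof -
  have "\<not> constant (poly f)" using assms by (simp add: constant_degree)
  then obtain w where w: "poly f w = 0" using Fundamental_Theorem_Algebra.fundamental_theorem_of_algebra by blast
  then obtain h where fh: "f = [:-w, 1:] * h" using poly_eq_0_iff_dvd by (metis dvdE)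
  have "f \<noteq> 0" using assms by auto
  with fh have h: "h \<noteq> 0" by auto
  have "degree h = m" using assms unfolding fh degree_linear_factor[OF h] by simp
  with w fh h show thesis by (rule that)
qed

lemma coeff_linear_factor_mult:
  fixes q :: "'a::comm_ring_1 poly"
  assumes "degree q \<le> m - 1" and "m \<ge> 1"
  shows "coeff ([:-w, 1:] * q) m = coeff q (m - 1)"
proof -
  obtain m' where m': "m = Suc m'" using assms(2) by (cases m) auto
  have "coeff q m = 0" using assms by (simp add: coeff_eq_0)
  then show ?thesis using m' by (simp add: coeff_pCons)
qed

lemma laguerre_op_add_root:
  fixes h :: "complex poly"
  assumes h: "h \<noteq> 0" "degree h = m" and deg: "degree (laguerre_op mu t h) \<le> m - 1"
  shows "degree (laguerre_op mu t ([:-w, 1:] * h)) \<le> m"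
    and "coeff (laguerre_op mu t ([:-w, 1:] * h)) m / lead_coeff ([:-w, 1:] * h)
      = coeff (laguerre_op mu t h) (m - 1) / lead_coeff h + (t - mu * w)"
    and "z \<noteq> w \<Longrightarrow> poly h z \<noteq> 0 \<Longrightarrow>
      poly (laguerre_op mu t ([:-w, 1:] * h)) z / poly ([:-w, 1:] * h) z
      = poly (laguerre_op mu t h) z / poly h z + (t - mu * w) / (z - w)"
proof -
  define E where "E = laguerre_op mu t h"
  have E0: "m = 0 \<Longrightarrow> E = 0" unfolding E_def using h(2) laguerre_op_degree_0 by blast
  have step: "laguerre_op mu t ([:-w, 1:] * h) = [:-w, 1:] * E + smult (t - mu * w) h"
    unfolding E_def by (rule laguerre_op_linear_factor[OF h(1)])
  have "degree ([:-w, 1:] * E) \<le> m"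
  proof (cases "m = 0")
    case False
    have "degree ([:-w, 1:] * E) \<le> degree [:-w, 1:] + degree E" by (rule degree_mult_le)
    with deg False show ?thesis unfolding E_def by simp
  qed (simp add: E0)
  then show "degree (laguerre_op mu t ([:-w, 1:] * h)) \<le> m"
    unfolding step using h(2) by (simp add: degree_add_le)
  have "coeff ([:-w, 1:] * E) m = coeff E (m - 1)"
    using coeff_linear_factor_mult[of E m w] deg E0 unfolding E_def by (cases "m = 0") auto
  moreover have "coeff h m \<noteq> 0" using h by (metis leading_coeff_0_iff)
  ultimately show "coeff (laguerre_op mu t ([:-w, 1:] * h)) m / lead_coeff ([:-w, 1:] * h)
      = coeff (laguerre_op mu t h) (m - 1) / lead_coeff h + (t - mu * w)"
    unfolding step lead_coeff_mult E_def[symmetric] using h(2) by (simp add: field_simps)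
  assume "z \<noteq> w" "poly h z \<noteq> 0"
  then show "poly (laguerre_op mu t ([:-w, 1:] * h)) z / poly ([:-w, 1:] * h) z
      = poly (laguerre_op mu t h) z / poly h z + (t - mu * w) / (z - w)"
    unfolding step E_def[symmetric] by (simp add: field_simps)
qed

text \<open>Peeling off one root \<open>w\<close> at a time: both quantities below are sums over the roots
  of \<open>f\<close> of terms \<open>t - mu w\<close> and \<open>(t - mu w) / (z - w)\<close>, each with positive real
  part after the rotation.\<close>
lemma laguerre_op_invariant:
  fixes f :: "complex poly"
  assumes t: "cmod t > cmod mu" and "degree f = m"
    and "\<forall>w. poly f w = 0 \<longrightarrow> cmod w \<le> 1"
  shows "degree (laguerre_op mu t f) \<le> m - 1 \<and>
    (m \<ge> 1 \<longrightarrow> Re (cnj t * (coeff (laguerre_op mu t f) (m - 1) / lead_coeff f)) > 0 \<and>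
      (\<forall>z. cmod z > 1 \<longrightarrow> Re ((z * cnj t - cnj mu) * (poly (laguerre_op mu t f) z / poly f z)) > 0))"
  using assms(2,3)
proof (induction m arbitrary: f)
  case 0
  then show ?case by (simp add: laguerre_op_degree_0)
next
  case (Suc m)
  obtain w h where w: "poly f w = 0" and f: "f = [:-w, 1:] * h" and h: "h \<noteq> 0" "degree h = m"
    using root_linear_factorE[OF Suc.prems(1)] .
  have w_le: "cmod w \<le> 1" using Suc.prems(2) w by blast
  have roots_h: "\<forall>x. poly h x = 0 \<longrightarrow> cmod x \<le> 1" using Suc.prems(2) f by auto
  note IH = Suc.IH[OF h(2) roots_h]
  note step = laguerre_op_add_root[OF h conjunct1[OF IH], where w = w]
  have E0: "m = 0 \<Longrightarrow> laguerre_op mu t h = 0" using h(2) laguerre_op_degree_0 by blast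
  have "Re (cnj t * (coeff (laguerre_op mu t h) (m - 1) / lead_coeff h)) \<ge> 0"
    using IH E0 by (cases "m = 0") (auto simp: less_imp_le)
  moreover have "coeff (laguerre_op mu t f) (Suc m - 1) / lead_coeff f
      = coeff (laguerre_op mu t h) (m - 1) / lead_coeff h + (t - mu * w)"
    using step(2) unfolding f by simp
  ultimately have coeff: "Re (cnj t * (coeff (laguerre_op mu t f) (Suc m - 1) / lead_coeff f)) > 0"
    using Re_cnj_mult_diff_pos[OF w_le t] by (simp add: distrib_left)
  have "Re ((z * cnj t - cnj mu) * (poly (laguerre_op mu t f) z / poly f z)) > 0"
    if z: "cmod z > 1" for z
  proof -
    have "z \<noteq> w" "poly h z \<noteq> 0" using z w_le roots_h by force+
    then have "poly (laguerre_op mu t f) z / poly f z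
        = poly (laguerre_op mu t h) z / poly h z + (t - mu * w) / (z - w)"
      unfolding f by (rule step(3))
    moreover have "Re ((z * cnj t - cnj mu) * (poly (laguerre_op mu t h) z / poly h z)) \<ge> 0"
      using IH E0 z by (cases "m = 0") (auto simp: less_imp_le)
    ultimately show ?thesis
      using Re_laguerre_term_pos[OF z w_le t] by (simp add: distrib_left)
  qed
  with step(1) coeff show ?case unfolding f by simp
qed

lemma laguerre_op_roots_in_disk:
  fixes f :: "complex poly"
  assumes t: "cmod t > cmod mu" and f: "degree f = m" "m \<ge> 1"
    and roots: "\<And>w. poly f w = 0 \<Longrightarrow> cmod w \<le> 1"
  shows "degree (laguerre_op mu t f) = m - 1"
    and "poly (laguerre_op mu t f) w = 0 \<Longrightarrow> cmod w \<le> 1"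
proof -
  from roots have "\<forall>w. poly f w = 0 \<longrightarrow> cmod w \<le> 1" by blast
  note inv = laguerre_op_invariant[OF t f(1) this]
  then have "coeff (laguerre_op mu t f) (m - 1) \<noteq> 0" using f(2) by fastforce
  with inv show "degree (laguerre_op mu t f) = m - 1" by (simp add: le_antisym le_degree)
  show "cmod w \<le> 1" if "poly (laguerre_op mu t f) w = 0"
  proof (rule ccontr)
    assume "\<not> cmod w \<le> 1"
    with inv f(2) have "Re ((w * cnj t - cnj mu) * (poly (laguerre_op mu t f) w / poly f w)) > 0"
      by simp
    with that show False by simp
  qed
qed

lemma linear_root_halfplane:
  fixes a0 a1 h :: complex
  assumes "\<And>y. a0 + a1 * y = 0 \<Longrightarrow> cmod y \<le> cmod (y - h)"
  shows "cmod a0 \<le> cmod (a0 + h * a1)"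
proof (cases "a1 = 0")
  case False
  have "a0 + a1 * (- a0 / a1) = 0" using False by simp
  then have "cmod (- a0 / a1) \<le> cmod (- a0 / a1 - h)" by (rule assms)
  also have "- a0 / a1 - h = - ((a0 + h * a1) / a1)" using False by (simp add: field_simps)
  finally show ?thesis using False by (simp add: norm_divide divide_le_cancel)
qed simp

lemma quadratic_factorization_halfplane:
  fixes a0 a1 a2 h :: complex
  assumes roots: "\<And>y. a0 + a1 * y + a2 * y\<^sup>2 = 0 \<Longrightarrow> cmod y \<le> cmod (y - h)"
    and nz: "a0 \<noteq> 0 \<or> a1 \<noteq> 0 \<or> a2 \<noteq> 0"
  obtains C c1 d1 c2 d2 where "C \<noteq> 0" "c1 \<noteq> 0 \<or> d1 \<noteq> 0" "c2 \<noteq> 0 \<or> d2 \<noteq> 0"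
    "cmod c1 \<le> cmod (c1 + h * d1)" "cmod c2 \<le> cmod (c2 + h * d2)"
    "a0 = C * c1 * c2" "a1 = C * (c1 * d2 + c2 * d1)" "a2 = C * d1 * d2"
proof (cases "a2 = 0")
  case True
  have "cmod a0 \<le> cmod (a0 + h * a1)"
    by (rule linear_root_halfplane) (use roots True in auto)
  with True nz show thesis by (intro that[of 1 a0 a1 1 0]) auto
next
  case False
  define s where "s = csqrt (a1\<^sup>2 - 4 * a2 * a0)"
  define y1 where "y1 = (- a1 + s) / (2 * a2)"
  define y2 where "y2 = (- a1 - s) / (2 * a2)"
  have e1: "a1 = a2 * (- y1 - y2)" unfolding y1_def y2_def using False by (simp add: field_simps)
  have "a2 * y1 * y2 = (a1\<^sup>2 - s\<^sup>2) / (4 * a2)" unfolding y1_def y2_def using False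
    by (simp add: field_simps power2_eq_square)
  also have "\<dots> = a0" unfolding s_def using False by (simp add: field_simps)
  finally have e0: "a0 = a2 * y1 * y2" by simp
  have fac: "a0 + a1 * y + a2 * y\<^sup>2 = a2 * (y - y1) * (y - y2)" for y
    unfolding e0 e1 by (simp add: algebra_simps power2_eq_square)
  have "cmod y1 \<le> cmod (y1 - h)" "cmod y2 \<le> cmod (y2 - h)"
    using roots fac[of y1] fac[of y2] by simp_all
  then have "cmod (- y1) \<le> cmod (- y1 + h * 1)" "cmod (- y2) \<le> cmod (- y2 + h * 1)"
    by (simp_all add: norm_minus_commute)
  with False e0 e1 show thesis by (intro that[of a2 "- y1" 1 "- y2" 1]) (simp_all add: algebra_simps)
qed

lemma laguerre_param_norm_gt:
  fixes c d z :: complex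
  assumes n: "n \<ge> 1" and cd: "c \<noteq> 0 \<or> d \<noteq> 0"
    and halfplane: "cmod c \<le> cmod (c + of_nat n / 2 * d)" and z: "cmod z > 1"
  shows "cmod ((c / of_nat n + d / 2) * z) > cmod (c / of_nat n)"
proof -
  define T where "T = c + of_nat n / 2 * d"
  have eq: "c / of_nat n + d / 2 = T / of_nat n" unfolding T_def using n by (simp add: field_simps)
  have "T \<noteq> 0" using halfplane cd n unfolding T_def by auto
  then have "cmod T < cmod T * cmod z" using z by simp
  then have "cmod c < cmod T * cmod z" using halfplane T_def by simp
  then show ?thesis unfolding eq using n by (simp add: norm_mult norm_divide divide_strict_right_mono)
qed

lemma poly_laguerre_op_twice:
  fixes f :: "complex poly"
  assumes f: "degree f = n" and n: "n \<ge> 1" and g: "degree (laguerre_op mu1 t1 f) = n - 1"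
  shows "poly (laguerre_op mu2 t2 (laguerre_op mu1 t1 f)) z =
      mu1 * mu2 * of_nat n * (of_nat n - 1) * poly f z
      + (of_nat n - 1) * (mu2 * (t1 - mu1 * z) + mu1 * (t2 - mu2 * z)) * poly (pderiv f) z
      + (t1 - mu1 * z) * (t2 - mu2 * z) * poly (pderiv (pderiv f)) z"
proof -
  have nn: "(of_nat (n - 1) :: complex) = of_nat n - 1" using n by (simp add: of_nat_diff)
  have E2: "laguerre_op mu2 t2 (laguerre_op mu1 t1 f) =
      smult (mu2 * (of_nat n - 1)) (smult (mu1 * of_nat n) f + [:t1, -mu1:] * pderiv f)
      + [:t2, -mu2:] * pderiv (smult (mu1 * of_nat n) f + [:t1, -mu1:] * pderiv f)"
    unfolding laguerre_op_def[of mu2] g nn unfolding laguerre_op_def f ..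
  show ?thesis
    unfolding E2 by (simp add: pderiv_add pderiv_smult pderiv_mult pderiv_pCons pderiv_minus algebra_simps)
qed

lemma B_op_degree_1_nonzero:
  fixes f :: "complex poly"
  assumes U: "\<And>z. U_poly 1 l0 l1 l2 z = 0 \<Longrightarrow> cmod z \<le> cmod (z - 1 / 2)"
    and f: "degree f = 1" and roots: "\<And>w. poly f w = 0 \<Longrightarrow> cmod w \<le> 1"
    and z: "cmod z > 1"
  shows "B_op 1 l0 l1 l2 f z \<noteq> 0"
proof -
  have "cmod l0 \<le> cmod (l0 + 1 / 2 * l1)"
    by (rule linear_root_halfplane) (use U in \<open>auto simp: U_poly_def\<close>)
  moreover have "l0 \<noteq> 0 \<or> l1 \<noteq> 0"
    using U[of "1 / 2"] by (auto simp: U_poly_def)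
  ultimately have "cmod ((l0 + l1 / 2) * z) > cmod l0"
    using laguerre_param_norm_gt[of 1 l0 l1 z] z by simp
  then have "poly (laguerre_op l0 ((l0 + l1 / 2) * z) f) z \<noteq> 0"
    using laguerre_op_roots_in_disk(2)[OF _ f _ roots] z by force
  moreover have "pderiv (pderiv f) = 0" using f by (simp add: pderiv_eq_0_iff degree_pderiv)
  then have "poly (laguerre_op l0 ((l0 + l1 / 2) * z) f) z = B_op 1 l0 l1 l2 f z"
    unfolding laguerre_op_def B_op_def f by (simp add: algebra_simps)
  ultimately show ?thesis by simp
qed

lemma U_poly_factorization:
  assumes n: "n \<ge> 2"
    and U: "\<And>z. U_poly n l0 l1 l2 z = 0 \<Longrightarrow> cmod z \<le> cmod (z - of_nat n / 2)"
  obtains C c1 d1 c2 d2 where "C \<noteq> 0" "c1 \<noteq> 0 \<or> d1 \<noteq> 0" "c2 \<noteq> 0 \<or> d2 \<noteq> 0"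
    "cmod c1 \<le> cmod (c1 + of_nat n / 2 * d1)" "cmod c2 \<le> cmod (c2 + of_nat n / 2 * d2)"
    "l0 = C * c1 * c2" "of_nat n * l1 = C * (c1 * d2 + c2 * d1)"
    "of_nat n * (of_nat n - 1) / 2 * l2 = C * d1 * d2"
proof -
  define N :: complex where "N = of_nat n"
  have "N \<noteq> 0" using n unfolding N_def by auto
  have nn: "(of_nat (n * (n - 1)) :: complex) = N * (N - 1)"
    unfolding N_def using n by (simp add: of_nat_diff)
  have roots_U: "cmod y \<le> cmod (y - N / 2)"
    if "l0 + (N * l1) * y + (N * (N - 1) / 2 * l2) * y\<^sup>2 = 0" for y
    using U[of y] that unfolding U_poly_def nn N_def by (simp add: algebra_simps)
  have "l0 \<noteq> 0 \<or> N * l1 \<noteq> 0 \<or> N * (N - 1) / 2 * l2 \<noteq> 0"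
    using roots_U[of "N / 2"] \<open>N \<noteq> 0\<close> by auto
  from quadratic_factorization_halfplane[OF roots_U this] that show thesis
    unfolding N_def by blast
qed

text \<open>The factorization of \<open>U\<close> into two linear factors turns \<open>B\<close> into the composite of two
  Laguerre operators.\<close>
lemma B_op_eq_laguerre_op_twice:
  fixes f :: "complex poly" and n :: nat
  defines "N \<equiv> of_nat n :: complex"
  assumes n: "n \<ge> 2" and f: "degree f = n"
    and E1: "degree (laguerre_op (c1 / N) ((c1 / N + d1 / 2) * z) f) = n - 1"
    and e0: "l0 = C * c1 * c2" and e1: "N * l1 = C * (c1 * d2 + c2 * d1)"
    and e2: "N * (N - 1) / 2 * l2 = C * d1 * d2"
  shows "(N - 1) * B_op n l0 l1 l2 f z = C * N *
    poly (laguerre_op (c2 / N) ((c2 / N + d2 / 2) * z) (laguerre_op (c1 / N) ((c1 / N + d1 / 2) * z) f)) z"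
proof -
  have N0: "N \<noteq> 0" and N1: "N - 1 \<noteq> 0" using n unfolding N_def by auto
  have l1: "l1 = C * (c1 * d2 + c2 * d1) / N" using e1 N0 by (simp add: field_simps)
  have l2: "l2 = 2 * C * d1 * d2 / (N * (N - 1))" using e2 N0 N1 by (simp add: field_simps)
  have "n \<ge> 1" using n by simp
  note twice = poly_laguerre_op_twice[OF f this E1[unfolded N_def], of "c2 / N" "(c2 / N + d2 / 2) * z" z]
  show ?thesis
    unfolding twice[folded N_def] B_op_def N_def[symmetric] l1 l2 e0
    using N0 N1 by (simp add: field_simps power2_eq_square)
qed

lemma B_op_degree_ge_2_nonzero:
  fixes f :: "complex poly"
  assumes n: "n \<ge> 2"
    and U: "\<And>z. U_poly n l0 l1 l2 z = 0 \<Longrightarrow> cmod z \<le> cmod (z - of_nat n / 2)"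
    and f: "degree f = n" and roots: "\<And>w. poly f w = 0 \<Longrightarrow> cmod w \<le> 1"
    and z: "cmod z > 1"
  shows "B_op n l0 l1 l2 f z \<noteq> 0"
proof -
  obtain C c1 d1 c2 d2 where C: "C \<noteq> 0"
    and cd: "c1 \<noteq> 0 \<or> d1 \<noteq> 0" "c2 \<noteq> 0 \<or> d2 \<noteq> 0"
    and hp: "cmod c1 \<le> cmod (c1 + of_nat n / 2 * d1)" "cmod c2 \<le> cmod (c2 + of_nat n / 2 * d2)"
    and e: "l0 = C * c1 * c2" "of_nat n * l1 = C * (c1 * d2 + c2 * d1)"
      "of_nat n * (of_nat n - 1) / 2 * l2 = C * d1 * d2"
    using U_poly_factorization[OF n U] by blast
  have "n \<ge> 1" using n by simp
  note t1 = laguerre_param_norm_gt[OF this cd(1) hp(1) z]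
  note t2 = laguerre_param_norm_gt[OF \<open>n \<ge> 1\<close> cd(2) hp(2) z]
  note E1 = laguerre_op_roots_in_disk[OF t1 f \<open>n \<ge> 1\<close> roots]
  have "poly (laguerre_op (c2 / of_nat n) ((c2 / of_nat n + d2 / 2) * z)
      (laguerre_op (c1 / of_nat n) ((c1 / of_nat n + d1 / 2) * z) f)) z \<noteq> 0"
    using laguerre_op_roots_in_disk(2)[OF t2 E1(1) _ E1(2)] n z by force
  with B_op_eq_laguerre_op_twice[OF n f E1(1) e] C n show ?thesis by auto
qed

lemma B_op_nonzero:
  fixes f :: "complex poly"
  assumes n: "n \<ge> 1"
    and U: "\<And>z. U_poly n l0 l1 l2 z = 0 \<Longrightarrow> cmod z \<le> cmod (z - of_nat n / 2)"
    and f: "degree f = n" and roots: "\<And>w. poly f w = 0 \<Longrightarrow> cmod w \<le> 1"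
    and z: "cmod z > 1"
  shows "B_op n l0 l1 l2 f z \<noteq> 0"
proof (cases "n = 1")
  case True
  then show ?thesis using B_op_degree_1_nonzero[of l0 l1 l2 f z] U f roots z by simp
next
  case False
  with n show ?thesis using B_op_degree_ge_2_nonzero[OF _ U f roots z] by simp
qed

lemma dilation_factor_ineq_real:
  fixes k r R s q X :: real
  assumes k: "k > 0" and r: "r \<ge> k" and R: "R > r" and s: "s > 1"
    and q: "0 \<le> q" "q \<le> k" and X: "X \<ge> - (s * q)"
  shows "(R + k)\<^sup>2 * (r\<^sup>2 * s\<^sup>2 - 2 * r * X + q\<^sup>2) < (k + r)\<^sup>2 * (R\<^sup>2 * s\<^sup>2 - 2 * R * X + q\<^sup>2)"
proof -
  define A where "A = 2 * R * r + R * k + r * k"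
  define E where "E = k * A * s\<^sup>2 + 2 * (R * r - k\<^sup>2) * X - (R + r + 2 * k) * q\<^sup>2"
  have diff: "(k + r)\<^sup>2 * (R\<^sup>2 * s\<^sup>2 - 2 * R * X + q\<^sup>2) - (R + k)\<^sup>2 * (r\<^sup>2 * s\<^sup>2 - 2 * r * X + q\<^sup>2)
      = (R - r) * E"
    unfolding E_def A_def by (simp add: algebra_simps power2_eq_square)
  have Rr: "R * r - k\<^sup>2 \<ge> 0"
    using mult_mono[of k R k r] k r R by (simp add: power2_eq_square)
  have "2 * (R * r - k\<^sup>2) * X \<ge> 2 * (R * r - k\<^sup>2) * (- (s * q))"
    using Rr X by (intro mult_left_mono) auto
  moreover have "2 * (R * r - k\<^sup>2) * (- (s * q)) \<ge> 2 * (R * r - k\<^sup>2) * (- (s * k))"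
    using Rr s q by (intro mult_left_mono) auto
  moreover have "(R + r + 2 * k) * q\<^sup>2 \<le> (R + r + 2 * k) * k\<^sup>2"
    using q k r R by (intro mult_left_mono power_mono) auto
  ultimately have "k * A * s\<^sup>2 - 2 * (R * r - k\<^sup>2) * (s * k) - (R + r + 2 * k) * k\<^sup>2 \<le> E"
    unfolding E_def by linarith
  moreover have "k * A * s\<^sup>2 - 2 * (R * r - k\<^sup>2) * (s * k) - (R + r + 2 * k) * k\<^sup>2
      = k * ((s - 1) * (A * s + k * (R + r + 2 * k)))"
    unfolding A_def by (simp add: algebra_simps power2_eq_square)
  moreover have "k * ((s - 1) * (A * s + k * (R + r + 2 * k))) > 0"
    using k s r R unfolding A_def by (simp add: add_pos_pos)
  ultimately have "E > 0" by linarith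
  with R have "(R - r) * E > 0" by simp
  with diff show ?thesis by linarith
qed

lemma norm_dilated_linear_factor_less:
  fixes z w :: complex and k r R :: real
  assumes k: "k > 0" and r: "r \<ge> k" and R: "R > r" and z: "cmod z > 1" and w: "cmod w \<le> k"
  shows "(R + k) * cmod (of_real r * z - w) < (k + r) * cmod (of_real R * z - w)"
proof -
  have sq: "(cmod (of_real a * z - w))\<^sup>2 = a\<^sup>2 * (cmod z)\<^sup>2 - 2 * a * Re (z * cnj w) + (cmod w)\<^sup>2"
    for a :: real
    unfolding cmod_power2 by (simp add: algebra_simps power2_eq_square)
  have "\<bar>Re (z * cnj w)\<bar> \<le> cmod z * cmod w"
    using abs_Re_le_cmod[of "z * cnj w"] by (simp add: norm_mult)
  then have "((R + k) * cmod (of_real r * z - w))\<^sup>2 < ((k + r) * cmod (of_real R * z - w))\<^sup>2"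
    unfolding power_mult_distrib sq
    using dilation_factor_ineq_real[OF k r R z norm_ge_zero w] by simp
  moreover have "(k + r) * cmod (of_real R * z - w) \<ge> 0" using k r by simp
  ultimately show ?thesis by (rule power2_less_imp_less)
qed

lemma norm_dilated_poly_le:
  fixes H :: "complex poly" and z :: complex and k r R :: real
  assumes k: "k > 0" and r: "r \<ge> k" and R: "R > r" and z: "cmod z > 1"
    and "degree H = m" and "H \<noteq> 0" and "\<And>w. poly H w = 0 \<Longrightarrow> cmod w \<le> k"
  shows "(R + k) ^ m * cmod (poly H (of_real r * z)) \<le> (k + r) ^ m * cmod (poly H (of_real R * z))
    \<and> (m \<ge> 1 \<longrightarrow>
      (R + k) ^ m * cmod (poly H (of_real r * z)) < (k + r) ^ m * cmod (poly H (of_real R * z)))"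
  using assms(5-7)
proof (induction m arbitrary: H)
  case 0
  then obtain a where "H = [:a:]" by (metis degree_eq_zeroE)
  then show ?case by simp
next
  case (Suc m)
  obtain w h where w: "poly H w = 0" and Hh: "H = [:-w, 1:] * h" and h: "h \<noteq> 0"
    and dh: "degree h = m"
    using root_linear_factorE[OF Suc.prems(1)] .
  have wk: "cmod w \<le> k" using Suc.prems(3) w by blast
  have roots_h: "poly h x = 0 \<Longrightarrow> cmod x \<le> k" for x using Suc.prems(3) Hh by auto
  have "cmod (of_real R * z) > k"
    using z R r k by (simp add: norm_mult) (smt (verit) mult_less_cancel_left1)
  then have hR: "poly h (of_real R * z) \<noteq> 0" using roots_h by force
  define a where "a = (R + k) * cmod (of_real r * z - w)"
  define b where "b = (k + r) * cmod (of_real R * z - w)"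
  define c where "c = (R + k) ^ m * cmod (poly h (of_real r * z))"
  define d where "d = (k + r) ^ m * cmod (poly h (of_real R * z))"
  have "a < b" unfolding a_def b_def by (rule norm_dilated_linear_factor_less[OF k r R z wk])
  moreover have "c \<le> d" using Suc.IH[OF dh h roots_h] unfolding c_def d_def by blast
  moreover have "a \<ge> 0" "d > 0" unfolding a_def d_def using R r k hR by simp_all
  ultimately have "a * c < b * d" by (meson le_less_trans mult_left_mono mult_strict_right_mono)
  moreover have "(R + k) ^ Suc m * cmod (poly H (of_real r * z)) = a * c"
    "(k + r) ^ Suc m * cmod (poly H (of_real R * z)) = b * d"
    unfolding Hh poly_linear_factor norm_mult a_def b_def c_def d_def by (simp_all add: mult_ac)
  ultimately show ?case by simp
qed

definition dilation_sum :: "real \<Rightarrow> real \<Rightarrow> complex \<Rightarrow> complex poly \<Rightarrow> complex poly" where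
  "dilation_sum R r c H = H \<circ>\<^sub>p [:0, of_real R:] + smult c (H \<circ>\<^sub>p [:0, of_real r:])"

lemma poly_dilation_sum:
  "poly (dilation_sum R r c H) z = poly H (of_real R * z) + c * poly H (of_real r * z)"
  unfolding dilation_sum_def by (simp add: poly_pcompose mult.commute)

lemma dilation_sum_diff:
  "dilation_sum R r c (P - smult a F) = dilation_sum R r c P - smult a (dilation_sum R r c F)"
  unfolding dilation_sum_def
  by (rule poly_eq_poly_eq_iff[THEN iffD1], rule ext) (simp add: poly_pcompose algebra_simps)

lemma dilation_sum_roots_in_disk:
  fixes H :: "complex poly" and k r R :: real
  assumes k: "k > 0" and r: "r \<ge> k" and R: "R > r" and n: "n \<ge> 1"
    and c: "cmod c \<le> ((R + k) / (k + r)) ^ n"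
    and H: "degree H = n" and roots: "\<And>w. poly H w = 0 \<Longrightarrow> cmod w \<le> k"
    and root: "poly (dilation_sum R r c H) z = 0"
  shows "cmod z \<le> 1"
proof (rule ccontr)
  assume "\<not> cmod z \<le> 1"
  moreover have "H \<noteq> 0" using H n by auto
  ultimately have "(R + k) ^ n * cmod (poly H (of_real r * z)) < (k + r) ^ n * cmod (poly H (of_real R * z))"
    using norm_dilated_poly_le[OF k r R _ H _ roots, of z] n by simp
  then have "((R + k) / (k + r)) ^ n * cmod (poly H (of_real r * z)) < cmod (poly H (of_real R * z))"
    using k r by (simp add: power_divide field_simps)
  moreover have "cmod (c * poly H (of_real r * z)) \<le> ((R + k) / (k + r)) ^ n * cmod (poly H (of_real r * z))"
    unfolding norm_mult using c by (simp add: mult_right_mono)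
  ultimately have "cmod (c * poly H (of_real r * z)) < cmod (poly H (of_real R * z))" by linarith
  with root show False
    unfolding poly_dilation_sum by (metis add_eq_0_iff norm_minus_cancel order_less_irrefl)
qed

lemma degree_dilation_sum:
  fixes H :: "complex poly" and k r R :: real
  assumes k: "k > 0" and r: "r \<ge> k" and R: "R > r" and n: "n \<ge> 1"
    and c: "cmod c \<le> ((R + k) / (k + r)) ^ n" and H: "degree H = n"
  shows "degree (dilation_sum R r c H) = n"
proof -
  have "cmod (c * of_real r ^ n) \<le> ((R + k) / (k + r)) ^ n * r ^ n"
    unfolding norm_mult norm_power using c r k by (simp add: mult_right_mono)
  also have "\<dots> = ((R + k) * r / (k + r)) ^ n" by (simp add: power_mult_distrib power_divide)
  also have "\<dots> < R ^ n"
  proof (rule power_strict_mono)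
    have "(R + k) * r < R * (k + r)" using k R r by (simp add: algebra_simps)
    then show "(R + k) * r / (k + r) < R" using k r by (simp add: divide_less_eq)
  qed (use k r R n in auto)
  also have "\<dots> = cmod (of_real R ^ n :: complex)" using R r k by (simp add: norm_power)
  finally have "of_real R ^ n + c * of_real r ^ n \<noteq> (0 :: complex)"
    by (metis add_eq_0_iff norm_minus_cancel order_less_irrefl)
  moreover have "coeff (dilation_sum R r c H) n = lead_coeff H * (of_real R ^ n + c * of_real r ^ n)"
    unfolding dilation_sum_def using H by (simp add: coeff_pcompose_linear algebra_simps)
  moreover have "H \<noteq> 0" using H n by auto
  ultimately have "coeff (dilation_sum R r c H) n \<noteq> 0" by simp
  moreover have "degree (dilation_sum R r c H) \<le> n"
    unfolding dilation_sum_def using H by (intro degree_add_le) (simp_all add: degree_pcompose)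
  ultimately show ?thesis by (simp add: le_antisym le_degree)
qed

lemma max_modulus_poly_ratio:
  fixes A C :: "complex poly"
  assumes C: "\<And>u. cmod u \<le> 1 \<Longrightarrow> poly C u \<noteq> 0"
    and AC: "\<And>u. cmod u = 1 \<Longrightarrow> cmod (poly A u) \<le> cmod (poly C u)"
    and u: "cmod u \<le> 1"
  shows "cmod (poly A u) \<le> cmod (poly C u)"
proof -
  have "cmod (poly A u / poly C u) \<le> 1"
  proof (rule maximum_modulus_frontier[where f = "\<lambda>u. poly A u / poly C u" and S = "cball 0 1"])
    show "(\<lambda>u. poly A u / poly C u) holomorphic_on interior (cball 0 1)"
      using C by (intro holomorphic_intros) auto
    show "continuous_on (closure (cball 0 1)) (\<lambda>u. poly A u / poly C u)"
      using C by (intro continuous_intros) auto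
    show "cmod (poly A v / poly C v) \<le> 1" if "v \<in> frontier (cball 0 1)" for v
      using that AC[of v] C[of v] by (simp add: norm_divide divide_le_eq_1)
  qed (use u in auto)
  then show ?thesis using C[OF u] by (simp add: norm_divide divide_le_eq_1)
qed

text \<open>\<open>poly (scaled_reversal m k P) u = u ^ m * poly P (k / u)\<close>: the substitution \<open>u = k / z\<close>
  moves the exterior of \<open>|z| = k\<close> into the unit disk, where the maximum modulus principle
  applies.\<close>
definition scaled_reversal :: "nat \<Rightarrow> real \<Rightarrow> complex poly \<Rightarrow> complex poly" where
  "scaled_reversal m k P = (\<Sum>j\<le>m. monom (coeff P j * of_real k ^ j) (m - j))"

lemma poly_scaled_reversal:
  assumes P: "degree P \<le> m" and u: "u \<noteq> 0"
  shows "poly (scaled_reversal m k P) u = u ^ m * poly P (of_real k / u)"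
proof -
  have "poly P (of_real k / u) = (\<Sum>j\<le>m. coeff P j * (of_real k / u) ^ j)"
    unfolding poly_altdef using P by (intro sum.mono_neutral_left) (auto simp: coeff_eq_0)
  then have "u ^ m * poly P (of_real k / u) = (\<Sum>j\<le>m. coeff P j * (u ^ m * (of_real k / u) ^ j))"
    by (simp add: sum_distrib_left algebra_simps)
  also have "\<dots> = (\<Sum>j\<le>m. coeff P j * of_real k ^ j * u ^ (m - j))"
  proof (rule sum.cong)
    fix j assume "j \<in> {..m}"
    then have "u ^ m = u ^ (m - j) * u ^ j" by (simp flip: power_add)
    then show "coeff P j * (u ^ m * (of_real k / u) ^ j) = coeff P j * of_real k ^ j * u ^ (m - j)"
      using u by (simp add: power_divide field_simps)
  qed simp
  finally show ?thesis unfolding scaled_reversal_def by (simp add: poly_sum poly_monom)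
qed

lemma poly_scaled_reversal_0: "poly (scaled_reversal m k P) 0 = coeff P m * of_real k ^ m"
proof -
  have "poly (scaled_reversal m k P) 0 = (\<Sum>j\<le>m. coeff P j * of_real k ^ j * 0 ^ (m - j))"
    unfolding scaled_reversal_def by (simp add: poly_sum poly_monom)
  also have "\<dots> = coeff P m * of_real k ^ m"
    by (subst sum.remove[of _ m]) (auto intro!: sum.neutral)
  finally show ?thesis .
qed

lemma circle_bound_outside_interior_roots:
  fixes F P :: "complex poly" and k :: real
  assumes k: "k > 0" and F: "F \<noteq> 0" and roots: "\<And>w. poly F w = 0 \<Longrightarrow> cmod w < k"
    and P: "degree P \<le> degree F"
    and circle: "\<And>z. cmod z = k \<Longrightarrow> cmod (poly P z) \<le> cmod (poly F z)"
  shows "(\<forall>z. cmod z > k \<longrightarrow> cmod (poly P z) \<le> cmod (poly F z))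
    \<and> cmod (coeff P (degree F)) \<le> cmod (lead_coeff F)"
proof -
  define m where "m = degree F"
  define A where "A = scaled_reversal m k P"
  define C where "C = scaled_reversal m k F"
  have P': "degree P \<le> m" and F': "degree F \<le> m" using P unfolding m_def by simp_all
  have norm_k_div: "cmod (of_real k / u) = k / cmod u" for u using k by (simp add: norm_divide)
  have C_nonzero: "poly C u \<noteq> 0" if u: "cmod u \<le> 1" for u
  proof (cases "u = 0")
    case True
    then show ?thesis unfolding C_def m_def using F k by (simp add: poly_scaled_reversal_0)
  next
    case False
    have "k \<le> k / cmod u" using k u False by (simp add: le_divide_eq)
    then have "poly F (of_real k / u) \<noteq> 0" using roots norm_k_div[of u] by force
    then show ?thesis unfolding C_def poly_scaled_reversal[OF F' False] using False by simp
  qed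
  have A_le_C: "cmod (poly A u) \<le> cmod (poly C u)" if u: "cmod u \<le> 1" for u
  proof (rule max_modulus_poly_ratio[OF C_nonzero _ u])
    fix v :: complex assume v: "cmod v = 1"
    then have v0: "v \<noteq> 0" by auto
    have "cmod (poly P (of_real k / v)) \<le> cmod (poly F (of_real k / v))"
      using circle norm_k_div[of v] v by simp
    then show "cmod (poly A v) \<le> cmod (poly C v)"
      unfolding A_def C_def poly_scaled_reversal[OF P' v0] poly_scaled_reversal[OF F' v0]
      using v by (simp add: norm_mult norm_power)
  qed
  have "cmod (poly P z) \<le> cmod (poly F z)" if z: "cmod z > k" for z
  proof -
    define u where "u = of_real k / z"
    have "z \<noteq> 0" and u0: "u \<noteq> 0" using z k unfolding u_def by auto
    then have "of_real k / u = z" unfolding u_def using k by simp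
    moreover have "cmod u \<le> 1" unfolding u_def norm_k_div using z k by (simp add: divide_le_eq_1)
    ultimately have "cmod (u ^ m * poly P z) \<le> cmod (u ^ m * poly F z)"
      using A_le_C[of u] unfolding A_def C_def poly_scaled_reversal[OF P' u0] poly_scaled_reversal[OF F' u0]
      by simp
    then have "cmod u ^ m * cmod (poly P z) \<le> cmod u ^ m * cmod (poly F z)"
      by (simp add: norm_mult norm_power)
    then show ?thesis using \<open>u \<noteq> 0\<close> by (simp add: mult_le_cancel_left)
  qed
  moreover have "cmod (coeff P m) * k ^ m \<le> cmod (coeff F m) * k ^ m"
    using A_le_C[of 0] k unfolding A_def C_def poly_scaled_reversal_0 by (simp add: norm_mult norm_power)
  then have "cmod (coeff P m) \<le> cmod (coeff F m)" using k by (simp add: mult_le_cancel_right)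
  ultimately show ?thesis unfolding m_def by blast
qed

lemma circle_bound_at_omitted_point:
  fixes p q :: "complex poly" and w :: complex and k :: real
  assumes w: "cmod w = k" and k: "k > 0"
    and bound: "\<And>z. cmod z = k \<Longrightarrow> z \<noteq> w \<Longrightarrow> cmod (poly p z) \<le> cmod (poly q z)"
  shows "cmod (poly p w) \<le> cmod (poly q w)"
proof -
  define t where "t j = inverse (real (Suc j))" for j
  define s where "s j = w * exp (\<i> * of_real (t j))" for j
  have "s \<longlonglongrightarrow> w * exp (\<i> * of_real 0)"
    unfolding s_def t_def by (intro tendsto_intros LIMSEQ_inverse_real_of_nat)
  then have s: "s \<longlonglongrightarrow> w" by simp
  have "s j \<noteq> w" for j
  proof
    assume "s j = w"
    then have "Im (exp (\<i> * of_real (t j))) = 0" unfolding s_def using w k by auto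
    moreover have "sin (t j) > 0"
    proof (rule sin_gt_zero)
      have "t j \<le> 1" unfolding t_def by (simp add: inverse_le_1_iff)
      then show "t j < pi" using pi_gt3 by linarith
    qed (simp add: t_def)
    ultimately show False by (simp add: Im_exp)
  qed
  moreover have "cmod (s j) = k" for j unfolding s_def using w by (simp add: norm_mult)
  ultimately show ?thesis
    by (intro tendsto_le[OF _ isCont_tendsto_compose[OF _ s] isCont_tendsto_compose[OF _ s]])
      (simp_all add: bound)
qed

lemma circle_bound_cancel_root:
  fixes P F :: "complex poly" and k :: real
  assumes w: "cmod w = k" and k: "k > 0"
    and circle: "\<And>z. cmod z = k \<Longrightarrow> cmod (poly ([:-w, 1:] * P) z) \<le> cmod (poly ([:-w, 1:] * F) z)"
    and z: "cmod z = k"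
  shows "cmod (poly P z) \<le> cmod (poly F z)"
proof -
  have bound: "cmod (poly P v) \<le> cmod (poly F v)" if v: "cmod v = k" "v \<noteq> w" for v
  proof -
    have "cmod (v - w) * cmod (poly P v) \<le> cmod (v - w) * cmod (poly F v)"
      using circle[OF v(1)] unfolding poly_linear_factor norm_mult .
    then show ?thesis using v(2) by (simp add: mult_le_cancel_left)
  qed
  show ?thesis
    using bound[OF z] circle_bound_at_omitted_point[OF w k bound] by (cases "z = w") auto
qed

text \<open>Roots of \<open>F\<close> on the circle are roots of \<open>P\<close> as well; they are cancelled first, because
  the reversal of \<open>F\<close> must not vanish on the closed unit disk.\<close>
lemma circle_bound_outside:
  fixes F P :: "complex poly" and k :: real
  assumes k: "k > 0"
  shows "F \<noteq> 0 \<Longrightarrow> (\<And>w. poly F w = 0 \<Longrightarrow> cmod w \<le> k) \<Longrightarrow> degree P \<le> degree F \<Longrightarrow>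
    (\<And>z. cmod z = k \<Longrightarrow> cmod (poly P z) \<le> cmod (poly F z)) \<Longrightarrow>
    (\<forall>z. cmod z > k \<longrightarrow> cmod (poly P z) \<le> cmod (poly F z))
      \<and> cmod (coeff P (degree F)) \<le> cmod (lead_coeff F)"
proof (induction "degree F" arbitrary: F P rule: less_induct)
  case (less F P)
  show ?case
  proof (cases "\<exists>w. poly F w = 0 \<and> cmod w = k")
    case False
    then have "\<And>w. poly F w = 0 \<Longrightarrow> cmod w < k" using less.prems(2) by force
    then show ?thesis using circle_bound_outside_interior_roots[OF k] less.prems by blast
  next
    case True
    then obtain w where w: "poly F w = 0" and wk: "cmod w = k" by blast
    then have "poly P w = 0" using less.prems(4) by fastforce
    then obtain P1 where P1: "P = [:-w, 1:] * P1" using poly_eq_0_iff_dvd by (metis dvdE)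
    obtain F1 where F1: "F = [:-w, 1:] * F1" using w poly_eq_0_iff_dvd by (metis dvdE)
    have "F1 \<noteq> 0" using less.prems(1) F1 by auto
    then have dF: "degree F = Suc (degree F1)" unfolding F1 by (rule degree_linear_factor)
    have "degree P1 \<le> degree F1"
    proof (cases "P1 = 0")
      case False
      then show ?thesis using less.prems(3) unfolding P1 dF degree_linear_factor[OF False] by simp
    qed simp
    have "cmod (poly P1 z) \<le> cmod (poly F1 z)" if "cmod z = k" for z
      using circle_bound_cancel_root[OF wk k _ that] less.prems(4) unfolding P1 F1 by blast
    then have IH: "(\<forall>z. cmod z > k \<longrightarrow> cmod (poly P1 z) \<le> cmod (poly F1 z))
        \<and> cmod (coeff P1 (degree F1)) \<le> cmod (lead_coeff F1)"
      using less.hyps[of F1 P1] less.prems(2) \<open>F1 \<noteq> 0\<close> \<open>degree P1 \<le> degree F1\<close> dF F1 by auto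
    have "cmod (poly P z) \<le> cmod (poly F z)" if "cmod z > k" for z
      using IH that unfolding P1 F1 poly_linear_factor by (simp add: norm_mult mult_left_mono)
    moreover have "coeff P (degree F) = coeff P1 (degree F1)" "coeff F (degree F) = coeff F1 (degree F1)"
      unfolding dF using coeff_linear_factor_mult[of P1 "Suc (degree F1)" w]
        coeff_linear_factor_mult[of F1 "Suc (degree F1)" w] \<open>degree P1 \<le> degree F1\<close>
      by (simp_all add: P1 F1)
    ultimately show ?thesis using IH dF by simp
  qed
qed

lemma B_op_add: "B_op n l0 l1 l2 (p + q) z = B_op n l0 l1 l2 p z + B_op n l0 l1 l2 q z"
  unfolding B_op_def by (simp add: pderiv_add field_simps)

lemma B_op_diff: "B_op n l0 l1 l2 (p - q) z = B_op n l0 l1 l2 p z - B_op n l0 l1 l2 q z"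
  unfolding B_op_def by (simp add: pderiv_diff field_simps)

lemma B_op_smult: "B_op n l0 l1 l2 (smult c q) z = c * B_op n l0 l1 l2 q z"
  unfolding B_op_def by (simp add: pderiv_smult algebra_simps)

lemma B_op_dilation_sum:
  "B_op n l0 l1 l2 (dilation_sum R r c P) z = B_op n l0 l1 l2 (P \<circ>\<^sub>p [:0, of_real R:]) z
    + c * B_op n l0 l1 l2 (P \<circ>\<^sub>p [:0, of_real r:]) z"
  unfolding dilation_sum_def B_op_add B_op_smult ..

lemma B_op_dilation_sum_nonzero:
  fixes H :: "complex poly" and k r R :: real
  assumes n: "n \<ge> 1"
    and U: "\<And>z. U_poly n l0 l1 l2 z = 0 \<Longrightarrow> cmod z \<le> cmod (z - of_nat n / 2)"
    and k: "k > 0" and r: "r \<ge> k" and R: "R > r" and c: "cmod c \<le> ((R + k) / (k + r)) ^ n"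
    and H: "degree H = n" and roots: "\<And>w. poly H w = 0 \<Longrightarrow> cmod w \<le> k"
    and z: "cmod z > 1"
  shows "B_op n l0 l1 l2 (dilation_sum R r c H) z \<noteq> 0"
  using B_op_nonzero[OF n U degree_dilation_sum[OF k r R n c H]
      dilation_sum_roots_in_disk[OF k r R n c H roots] z] .

lemma sub_smult_roots_in_disk:
  fixes F P :: "complex poly" and k :: real and a :: complex
  assumes k: "k > 0" and F: "F \<noteq> 0" and roots: "\<And>w. poly F w = 0 \<Longrightarrow> cmod w \<le> k"
    and P: "degree P \<le> degree F"
    and circle: "\<And>z. cmod z = k \<Longrightarrow> cmod (poly P z) \<le> cmod (poly F z)"
    and a: "cmod a > 1"
  shows "degree (P - smult a F) = degree F"
    and "poly (P - smult a F) w = 0 \<Longrightarrow> cmod w \<le> k"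
proof -
  note outside = circle_bound_outside[OF k F roots P circle]
  have "cmod (lead_coeff F) > 0" using F by simp
  then have "cmod (lead_coeff F) < cmod a * cmod (lead_coeff F)" using a by simp
  then have "cmod (coeff P (degree F)) < cmod (a * lead_coeff F)"
    using outside by (simp add: norm_mult)
  then have "coeff (P - smult a F) (degree F) \<noteq> 0" by auto
  moreover have "degree (P - smult a F) \<le> degree F" using P by (simp add: degree_diff_le)
  ultimately show "degree (P - smult a F) = degree F" by (simp add: le_antisym le_degree)
  show "cmod w \<le> k" if "poly (P - smult a F) w = 0"
  proof (rule ccontr)
    assume "\<not> cmod w \<le> k"
    then have "poly F w \<noteq> 0" and "cmod (poly P w) \<le> cmod (poly F w)"
      using roots outside by force+
    moreover from \<open>poly F w \<noteq> 0\<close> have "cmod (poly F w) < cmod a * cmod (poly F w)"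
      using a by simp
    ultimately have "cmod (poly P w) < cmod (a * poly F w)" unfolding norm_mult by linarith
    with that show False by simp
  qed
qed

lemma B_op_dilation_sum_le_exterior:
  fixes F P :: "complex poly" and k r R :: real
  assumes n: "n \<ge> 1"
    and U: "\<And>z. U_poly n l0 l1 l2 z = 0 \<Longrightarrow> cmod z \<le> cmod (z - of_nat n / 2)"
    and k: "k > 0" and r: "r \<ge> k" and R: "R > r" and c: "cmod c \<le> ((R + k) / (k + r)) ^ n"
    and F: "degree F = n" and roots: "\<And>w. poly F w = 0 \<Longrightarrow> cmod w \<le> k"
    and P: "degree P \<le> n"
    and circle: "\<And>z. cmod z = k \<Longrightarrow> cmod (poly P z) \<le> cmod (poly F z)"
    and z: "cmod z > 1"
  shows "cmod (B_op n l0 l1 l2 (dilation_sum R r c P) z)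
    \<le> cmod (B_op n l0 l1 l2 (dilation_sum R r c F) z)"
proof (rule ccontr)
  define BP where "BP = B_op n l0 l1 l2 (dilation_sum R r c P) z"
  define BF where "BF = B_op n l0 l1 l2 (dilation_sum R r c F) z"
  assume "\<not> ?thesis"
  then have gt: "cmod BF < cmod BP" unfolding BP_def BF_def by simp
  have BF0: "BF \<noteq> 0" unfolding BF_def by (rule B_op_dilation_sum_nonzero[OF n U k r R c F roots z])
  define a where "a = BP / BF"
  have a: "cmod a > 1" unfolding a_def using gt BF0 by (simp add: norm_divide)
  have F0: "F \<noteq> 0" using F n by auto
  have PF: "degree P \<le> degree F" using F P by simp
  note H = sub_smult_roots_in_disk[OF k F0 roots PF circle a]
  have "degree (P - smult a F) = n" using H(1) F by simp
  from B_op_dilation_sum_nonzero[OF n U k r R c this H(2) z]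
  have "B_op n l0 l1 l2 (dilation_sum R r c (P - smult a F)) z \<noteq> 0" .
  moreover have "B_op n l0 l1 l2 (dilation_sum R r c (P - smult a F)) z = BP - a * BF"
    unfolding dilation_sum_diff B_op_diff B_op_smult BP_def BF_def ..
  moreover have "BP - a * BF = 0" unfolding a_def using BF0 by simp
  ultimately show False by simp
qed

lemma exterior_le_extends_to_circle:
  fixes f g :: "complex \<Rightarrow> real" and z :: complex
  assumes "isCont f z" "isCont g z" and le: "\<And>w. cmod w > 1 \<Longrightarrow> f w \<le> g w"
    and z: "cmod z \<ge> 1"
  shows "f z \<le> g z"
proof -
  define t where "t j = 1 + inverse (real (Suc j))" for j
  define s where "s j = of_real (t j) * z" for j
  have "s \<longlonglongrightarrow> of_real (1 + 0) * z"
    unfolding s_def t_def by (intro tendsto_intros LIMSEQ_inverse_real_of_nat)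
  then have s: "s \<longlonglongrightarrow> z" by simp
  have "cmod (s j) > 1" for j
  proof -
    have "t j > 1" unfolding t_def by simp
    moreover have "t j * 1 \<le> t j * cmod z" using \<open>t j > 1\<close> z by (intro mult_left_mono) auto
    moreover have "cmod (s j) = t j * cmod z" unfolding s_def norm_mult using \<open>t j > 1\<close> by simp
    ultimately show ?thesis by linarith
  qed
  then show ?thesis
    by (intro tendsto_le[OF _ isCont_tendsto_compose[OF assms(2) s] isCont_tendsto_compose[OF assms(1) s]])
      (use le in auto)
qed

lemma isCont_norm_B_op: "isCont (\<lambda>z. cmod (B_op n l0 l1 l2 f z)) z"
  unfolding B_op_def by (intro continuous_intros) auto

lemma B_op_dilation_le:
  fixes F P :: "complex poly" and k r R :: real and \<beta> :: complex
  assumes n: "n \<ge> 1"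
    and U: "\<And>z. U_poly n l0 l1 l2 z = 0 \<Longrightarrow> cmod z \<le> cmod (z - of_nat n / 2)"
    and k: "k > 0" and F: "degree F = n" and roots: "\<And>w. poly F w = 0 \<Longrightarrow> cmod w \<le> k"
    and P: "degree P \<le> n"
    and circle: "\<And>z. cmod z = k \<Longrightarrow> cmod (poly P z) \<le> cmod (poly F z)"
    and \<beta>: "cmod \<beta> \<le> 1" and R: "R > r" and r: "r \<ge> k" and z: "cmod z \<ge> 1"
  shows "cmod (B_op n l0 l1 l2 (P \<circ>\<^sub>p [:0, of_real R:]) z
      + \<beta> * of_real (((R + k) / (k + r)) ^ n) * B_op n l0 l1 l2 (P \<circ>\<^sub>p [:0, of_real r:]) z)
    \<le> cmod (B_op n l0 l1 l2 (F \<circ>\<^sub>p [:0, of_real R:]) z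
      + \<beta> * of_real (((R + k) / (k + r)) ^ n) * B_op n l0 l1 l2 (F \<circ>\<^sub>p [:0, of_real r:]) z)"
proof -
  define c where "c = \<beta> * of_real (((R + k) / (k + r)) ^ n)"
  have "((R + k) / (k + r)) ^ n \<ge> 0" using k r R by simp
  then have "cmod c = cmod \<beta> * ((R + k) / (k + r)) ^ n" unfolding c_def norm_mult norm_of_real by simp
  then have "cmod c \<le> ((R + k) / (k + r)) ^ n"
    using \<beta> \<open>((R + k) / (k + r)) ^ n \<ge> 0\<close> by (simp add: mult_left_le_one_le)
  then have "cmod (B_op n l0 l1 l2 (dilation_sum R r c P) w)
      \<le> cmod (B_op n l0 l1 l2 (dilation_sum R r c F) w)" if "cmod w > 1" for w
    using B_op_dilation_sum_le_exterior[OF n U k r R _ F roots P circle that] by blast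
  then have "cmod (B_op n l0 l1 l2 (dilation_sum R r c P) z)
      \<le> cmod (B_op n l0 l1 l2 (dilation_sum R r c F) z)"
    by (rule exterior_le_extends_to_circle[OF isCont_norm_B_op isCont_norm_B_op _ z])
  then show ?thesis unfolding B_op_dilation_sum c_def .
qed

lemma norm_B_op_dilation_unimodular_smult:
  assumes "cmod e = 1"
  shows "cmod (B_op n l0 l1 l2 (smult e F \<circ>\<^sub>p [:0, R:]) z + c * B_op n l0 l1 l2 (smult e F \<circ>\<^sub>p [:0, r:]) z)
    = cmod (B_op n l0 l1 l2 (F \<circ>\<^sub>p [:0, R:]) z + c * B_op n l0 l1 l2 (F \<circ>\<^sub>p [:0, r:]) z)"
proof -
  have "B_op n l0 l1 l2 (smult e F \<circ>\<^sub>p [:0, R:]) z + c * B_op n l0 l1 l2 (smult e F \<circ>\<^sub>p [:0, r:]) z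
    = e * (B_op n l0 l1 l2 (F \<circ>\<^sub>p [:0, R:]) z + c * B_op n l0 l1 l2 (F \<circ>\<^sub>p [:0, r:]) z)"
    unfolding pcompose_smult B_op_smult by (simp add: algebra_simps)
  then show ?thesis using assms by (simp add: norm_mult)
qed

theorem corollary2p2:
  fixes n :: nat and k :: real and F P :: "complex poly" and l0 l1 l2 :: complex
  assumes n: "n \<ge> 1"
    and k: "k > 0"
    and U: "\<forall>z. U_poly n l0 l1 l2 z = 0 \<longrightarrow> cmod z \<le> cmod (z - of_nat n / 2)"
    and degF: "degree F = n"
    and zerosF: "\<forall>z. poly F z = 0 \<longrightarrow> cmod z \<le> k"
    and degP: "degree P \<le> n"
    and PF: "\<forall>z. cmod z = k \<longrightarrow> cmod (poly P z) \<le> cmod (poly F z)"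
  shows "(\<forall>\<beta> :: complex. \<forall>R r :: real. \<forall>z :: complex.
            cmod \<beta> \<le> 1 \<longrightarrow> R > r \<longrightarrow> r \<ge> k \<longrightarrow> cmod z \<ge> 1 \<longrightarrow>
            cmod (B_op n l0 l1 l2 (P \<circ>\<^sub>p [:0, complex_of_real R:]) z
                  + \<beta> * complex_of_real (((R + k) / (k + r)) ^ n)
                      * B_op n l0 l1 l2 (P \<circ>\<^sub>p [:0, complex_of_real r:]) z)
            \<le> cmod (B_op n l0 l1 l2 (F \<circ>\<^sub>p [:0, complex_of_real R:]) z
                  + \<beta> * complex_of_real (((R + k) / (k + r)) ^ n)
                      * B_op n l0 l1 l2 (F \<circ>\<^sub>p [:0, complex_of_real r:]) z))
         \<and> (\<forall>\<gamma> :: real. \<forall>\<beta> :: complex. \<forall>R r :: real. \<forall>z :: complex.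
            let Q = smult (exp (\<i> * complex_of_real \<gamma>)) F in
            cmod \<beta> \<le> 1 \<longrightarrow> R > r \<longrightarrow> r \<ge> k \<longrightarrow> cmod z \<ge> 1 \<longrightarrow>
            cmod (B_op n l0 l1 l2 (Q \<circ>\<^sub>p [:0, complex_of_real R:]) z
                  + \<beta> * complex_of_real (((R + k) / (k + r)) ^ n)
                      * B_op n l0 l1 l2 (Q \<circ>\<^sub>p [:0, complex_of_real r:]) z)
            = cmod (B_op n l0 l1 l2 (F \<circ>\<^sub>p [:0, complex_of_real R:]) z
                  + \<beta> * complex_of_real (((R + k) / (k + r)) ^ n)
                      * B_op n l0 l1 l2 (F \<circ>\<^sub>p [:0, complex_of_real r:]) z))"
proof -
  have U': "\<And>z. U_poly n l0 l1 l2 z = 0 \<Longrightarrow> cmod z \<le> cmod (z - of_nat n / 2)"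
    and roots: "\<And>w. poly F w = 0 \<Longrightarrow> cmod w \<le> k"
    and circle: "\<And>z. cmod z = k \<Longrightarrow> cmod (poly P z) \<le> cmod (poly F z)"
    using U zerosF PF by blast+
  show ?thesis unfolding Let_def
  proof (intro conjI allI impI, goal_cases)
    case (1 \<beta> R r z)
    from B_op_dilation_le[OF n U' k degF roots degP circle 1] show ?case .
  next
    case (2 \<gamma> \<beta> R r z)
    show ?case by (rule norm_B_op_dilation_unimodular_smult) (simp add: norm_exp_i_times)
  qed
qed

end
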